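(* Every statistically compact metric space is compact.
   Context: For $A\subseteq\mathbb{N}$ let $d_n(A)=|A\cap\{1,\dots,n\}|/n$, $\overline{d}(A)=\limsup_n d_n(A)$, $\underline{d}(A)=\liminf_n d_n(A)$, and $d(A)$ their common value when equal. A sequence in $X$ is a map from an infinite subset $M\subseteq\mathbb{N}$ into $X$, written $(x_n)_{n\in M}$; a subsequence is $(x_n)_{n\in N}$ with $N\subseteq M$ infinite. It is nonthin if $\overline{d}(M)>0$. A nonthin sequence $(x_n)_{n\in M}$ is statistically convergent to $a\in X$ if for every open $U\ni a$, $d(\{n\in M:x_n\notin U\})=0$. A topological space $X$ is statistically compact if every nonthin sequence in $X$ has a nonthin subsequence that is statistically convergent to some point of $X$. *)

theory Defs
  imports "HOL-Analysis.Analysis"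
begin

definition dens_n :: "nat set \<Rightarrow> nat \<Rightarrow> real" where
  "dens_n A n = real (card (A \<inter> {1..n})) / real n"

definition upper_density :: "nat set \<Rightarrow> ereal" where
  "upper_density A = limsup (\<lambda>n. ereal (dens_n A n))"

definition density_zero :: "nat set \<Rightarrow> bool" where
  "density_zero A \<longleftrightarrow> (dens_n A \<longlonglongrightarrow> 0)"

definition nonthin :: "nat set \<Rightarrow> bool" where
  "nonthin M \<longleftrightarrow> upper_density M > 0"

text \<open>A nonthin sequence (x_n)_{n\<in>M} statistically converges to a (in the
  ambient topology; for a subspace S with a \<in> S, neighbourhoods in S are traces
  of open sets, so this coincides with the subspace notion).\<close>
definition stat_converges :: "nat set \<Rightarrow> (nat \<Rightarrow> 'a::topological_space) \<Rightarrow> 'a \<Rightarrow> bool" where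
  "stat_converges M x a \<longleftrightarrow>
     nonthin M \<and> (\<forall>U. open U \<and> a \<in> U \<longrightarrow> density_zero {n \<in> M. x n \<notin> U})"

definition stat_compact :: "'a::topological_space set \<Rightarrow> bool" where
  "stat_compact S \<longleftrightarrow>
    (\<forall>M x. infinite M \<and> nonthin M \<and> x ` M \<subseteq> S \<longrightarrow>
       (\<exists>N a. N \<subseteq> M \<and> infinite N \<and> nonthin N \<and> a \<in> S \<and> stat_converges N x a))"

end

theory Submission
  imports Defs
begin

text \<open>Index an infinite subset of the space injectively by \<open>\<nat>\<close>, which is nonthin, and take a
  nonthin subsequence statistically converging to \<open>a\<close>. Sets of density zero form an ideal
  containing the finite sets and no nonthin set, so every neighbourhood of \<open>a\<close> contains
  infinitely many terms, and \<open>a\<close> is a limit point. Bolzano--Weierstrass then gives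
  compactness in metric spaces.\<close>

lemma dens_n_nonneg: "dens_n A n \<ge> 0"
  by (simp add: dens_n_def)

lemma dens_n_mono: "A \<subseteq> B \<Longrightarrow> dens_n A n \<le> dens_n B n"
  unfolding dens_n_def by (intro divide_right_mono) (auto intro: card_mono)

lemma dens_n_Un_le: "dens_n (A \<union> B) n \<le> dens_n A n + dens_n B n"
proof -
  have "card ((A \<union> B) \<inter> {1..n}) \<le> card (A \<inter> {1..n}) + card (B \<inter> {1..n})"
    by (metis Int_Un_distrib2 card_Un_le)
  then show ?thesis
    unfolding dens_n_def add_divide_distrib[symmetric]
    by (intro divide_right_mono) linarith+
qed

lemma dens_n_finite_le: "finite A \<Longrightarrow> dens_n A n \<le> real (card A) / real n"
  unfolding dens_n_def by (intro divide_right_mono) (simp_all add: card_mono)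

lemma density_zero_subset:
  assumes "A \<subseteq> B" and "density_zero B"
  shows "density_zero A"
  using assms unfolding density_zero_def
  by (intro tendsto_sandwich[of "\<lambda>_. 0" "dens_n A" sequentially "dens_n B", OF _ _ tendsto_const])
     (simp_all add: dens_n_nonneg dens_n_mono)

lemma density_zero_Un:
  assumes "density_zero A" and "density_zero B"
  shows "density_zero (A \<union> B)"
proof -
  have "(\<lambda>n. dens_n A n + dens_n B n) \<longlonglongrightarrow> 0"
    using tendsto_add[of "dens_n A" 0 _ "dens_n B" 0] assms by (simp add: density_zero_def)
  then show ?thesis
    unfolding density_zero_def
    by (intro tendsto_sandwich[of "\<lambda>_. 0" "dens_n (A \<union> B)" _ "\<lambda>n. dens_n A n + dens_n B n",
        OF _ _ tendsto_const])
       (simp_all add: dens_n_nonneg dens_n_Un_le)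
qed

lemma density_zero_finite:
  assumes "finite A"
  shows "density_zero A"
  unfolding density_zero_def
  by (intro tendsto_sandwich[of "\<lambda>_. 0" "dens_n A" _ "\<lambda>n. real (card A) / real n",
        OF _ _ tendsto_const lim_const_over_n])
     (simp_all add: dens_n_nonneg dens_n_finite_le[OF assms])

lemma upper_density_eq_limit:
  assumes "dens_n A \<longlonglongrightarrow> c"
  shows "upper_density A = ereal c"
  unfolding upper_density_def
  by (rule lim_imp_Limsup[OF trivial_limit_sequentially tendsto_ereal[OF assms]])

lemma density_zero_imp_not_nonthin: "density_zero A \<Longrightarrow> \<not> nonthin A"
  by (simp add: density_zero_def nonthin_def upper_density_eq_limit)

lemma nonthin_UNIV: "nonthin UNIV"
proof -
  have "\<forall>\<^sub>F n in sequentially. dens_n UNIV n = 1"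
    using eventually_ge_at_top[of "1::nat"] by eventually_elim (simp add: dens_n_def)
  then have "dens_n UNIV \<longlonglongrightarrow> 1"
    by (rule tendsto_eventually)
  then show ?thesis
    by (simp add: nonthin_def upper_density_eq_limit)
qed

lemma stat_converges_imp_islimpt:
  assumes conv: "stat_converges N x a" and inj: "inj_on x N"
  shows "a islimpt x ` N"
proof (rule islimptI)
  fix U assume U: "a \<in> U" "open U"
  let ?inside = "{n \<in> N. x n \<in> U}"
  have outside: "density_zero {n \<in> N. x n \<notin> U}"
    using conv U by (simp add: stat_converges_def)
  have "infinite ?inside"
  proof
    assume "finite ?inside"
    then have "density_zero (?inside \<union> {n \<in> N. x n \<notin> U})"
      by (intro density_zero_Un density_zero_finite outside)
    then have "density_zero N"
      by (rule density_zero_subset[rotated]) auto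
    then show False
      using conv density_zero_imp_not_nonthin by (auto simp: stat_converges_def)
  qed
  then have "infinite (x ` ?inside)"
    using inj by (metis (no_types, lifting) finite_imageD inj_on_subset mem_Collect_eq subsetI)
  then have "infinite (x ` ?inside - {a})"
    by simp
  then obtain y where "y \<in> x ` ?inside - {a}"
    by (metis ex_in_conv finite.emptyI)
  then show "\<exists>y\<in>x ` N. y \<in> U \<and> y \<noteq> a"
    by auto
qed

theorem mainTheorem7:
  fixes S :: "'a::metric_space set"
  assumes "stat_compact S"
  shows "compact S"
proof (unfold compact_eq_Bolzano_Weierstrass, intro allI impI)
  fix T assume T: "infinite T \<and> T \<subseteq> S"
  then obtain f :: "nat \<Rightarrow> 'a" where f: "inj f" "range f \<subseteq> T"
    using infinite_countable_subset by blast
  with T have "range f \<subseteq> S"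
    by blast
  then obtain N a where N: "a \<in> S" "stat_converges N f a"
    using assms nonthin_UNIV unfolding stat_compact_def by (metis infinite_UNIV_nat)
  have "a islimpt f ` N"
    using stat_converges_imp_islimpt[OF N(2)] f(1) by (simp add: inj_on_subset)
  then have "a islimpt T"
    using f(2) islimpt_subset by blast
  with N(1) show "\<exists>x\<in>S. x islimpt T" by blast
qed

end
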